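(* Let $D$ be an integral domain and let $\mathcal{E}(D)$ be its essential prime spectrum. The following are equivalent: (i) $D$ is a PvMD; (ii) $D$ is an essential domain and there is a subset $Y\subseteq\operatorname{Spec}(D)$ such that $\{D_{\mathfrak p}:\mathfrak p\in Y\}$ is an essential representation of $D$ and $\operatorname{Cl}^c(Y)\subseteq\mathcal{E}(D)$.
   Context: All rings are commutative with identity. For an integral domain $D$ with quotient field $K$ and a nonzero fractional ideal $I$, set $(D:I)=\{x\in K: xI\subseteq D\}$, $I^v=(D:(D:I))$, and $I^t=\bigcup\{J^v: J\subseteq I,\ J \text{ finitely generated}\}$. An ideal $I$ is a $t$-ideal if $I=(0)$ or $I=I^t$; a $t$-prime is a prime $t$-ideal; a $t$-maximal ideal is a $t$-ideal maximal among proper $t$-ideals; $t\text{-Spec}(D)$ is the set of $t$-primes (including $(0)$). $D$ is a PvMD (Prüfer $v$-multiplication domain) if $D_{\mathfrak m}$ is a valuation domain for every $t$-maximal ideal $\mathfrak m$ of $D$. A valuation overring of $D$ is essential if it equals $D_{\mathfrak p}$ for some prime $\mathfrak p$ of $D$. An essential representation of $D$ is a family of essential valuation overrings of $D$ whose intersection is $D$; $D$ is essential if it has an essential representation. $\mathcal{E}(D)=\{\mathfrak p\in\operatorname{Spec}(D): D_{\mathfrak p}\text{ is a valuation domain}\}$. The constructible topology on $\operatorname{Spec}(A)$ is the coarsest topology in which every set $D(f)=\{\mathfrak p: f\notin\mathfrak p\}$, $f\in A$, is clopen; $\operatorname{Cl}^c(Y)$ denotes the closure of $Y\subseteq\operatorname{Spec}(A)$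 in this topology. *)

theory Defs
  imports "HOL-Analysis.Analysis"
begin

(* Convention: the integral domain D is a subring of a field K (the type 'k),
   and K is the quotient field of D. *)

definition subring :: "'k::field set \<Rightarrow> bool" where
  "subring D \<longleftrightarrow> 0 \<in> D \<and> 1 \<in> D \<and>
     (\<forall>a\<in>D. \<forall>b\<in>D. a + b \<in> D \<and> a - b \<in> D \<and> a * b \<in> D)"

definition frac_set :: "'k::field set \<Rightarrow> 'k set" where
  "frac_set D = {a / b | a b. a \<in> D \<and> b \<in> D \<and> b \<noteq> 0}"

definition quotient_field_of :: "'k::field set \<Rightarrow> bool" where
  "quotient_field_of D \<longleftrightarrow> subring D \<and> frac_set D = UNIV"

definition ideal_of :: "'k::field set \<Rightarrow> 'k set \<Rightarrow> bool" where
  "ideal_of D I \<longleftrightarrow> I \<subseteq> D \<and> 0 \<in> I \<and>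
     (\<forall>a\<in>I. \<forall>b\<in>I. a + b \<in> I) \<and> (\<forall>d\<in>D. \<forall>a\<in>I. d * a \<in> I)"

definition prime_ideal_of :: "'k::field set \<Rightarrow> 'k set \<Rightarrow> bool" where
  "prime_ideal_of D P \<longleftrightarrow> ideal_of D P \<and> P \<noteq> D \<and>
     (\<forall>a\<in>D. \<forall>b\<in>D. a * b \<in> P \<longrightarrow> a \<in> P \<or> b \<in> P)"

definition Spec :: "'k::field set \<Rightarrow> 'k set set" where
  "Spec D = {P. prime_ideal_of D P}"

definition ideal_gen :: "'k::field set \<Rightarrow> 'k set \<Rightarrow> 'k set" where
  "ideal_gen D F = {(\<Sum>x\<in>F. c x * x) | c. \<forall>x\<in>F. c x \<in> D}"

definition fin_gen_ideal :: "'k::field set \<Rightarrow> 'k set \<Rightarrow> bool" where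
  "fin_gen_ideal D J \<longleftrightarrow> (\<exists>F. finite F \<and> F \<subseteq> D \<and> J = ideal_gen D F)"

definition colon :: "'k::field set \<Rightarrow> 'k set \<Rightarrow> 'k set" where
  "colon D I = {x. \<forall>y\<in>I. x * y \<in> D}"

definition v_op :: "'k::field set \<Rightarrow> 'k set \<Rightarrow> 'k set" where
  "v_op D I = colon D (colon D I)"

definition t_op :: "'k::field set \<Rightarrow> 'k set \<Rightarrow> 'k set" where
  "t_op D I = \<Union>{v_op D J | J. J \<subseteq> I \<and> fin_gen_ideal D J \<and> J \<noteq> {0}}"

definition t_ideal :: "'k::field set \<Rightarrow> 'k set \<Rightarrow> bool" where
  "t_ideal D I \<longleftrightarrow> ideal_of D I \<and> (I = {0} \<or> I = t_op D I)"

definition t_maximal :: "'k::field set \<Rightarrow> 'k set \<Rightarrow> bool" where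
  "t_maximal D M \<longleftrightarrow> t_ideal D M \<and> M \<noteq> D \<and>
     (\<forall>J. t_ideal D J \<and> J \<noteq> D \<and> M \<subseteq> J \<longrightarrow> J = M)"

definition localization :: "'k::field set \<Rightarrow> 'k set \<Rightarrow> 'k set" where
  "localization D P = {a / b | a b. a \<in> D \<and> b \<in> D \<and> b \<notin> P}"

definition valuation_domain :: "'k::field set \<Rightarrow> bool" where
  "valuation_domain V \<longleftrightarrow> subring V \<and>
     (\<forall>x\<in>frac_set V. x \<noteq> 0 \<longrightarrow> x \<in> V \<or> inverse x \<in> V)"

definition PvMD :: "'k::field set \<Rightarrow> bool" where
  "PvMD D \<longleftrightarrow> (\<forall>M. t_maximal D M \<longrightarrow> valuation_domain (localization D M))"

definition essential_valuation_overring :: "'k::field set \<Rightarrow> 'k set \<Rightarrow> bool" where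
  "essential_valuation_overring D V \<longleftrightarrow> valuation_domain V \<and> D \<subseteq> V \<and>
     (\<exists>P\<in>Spec D. V = localization D P)"

definition essential_representation :: "'k::field set \<Rightarrow> 'k set set \<Rightarrow> bool" where
  "essential_representation D \<V> \<longleftrightarrow>
     (\<forall>V\<in>\<V>. essential_valuation_overring D V) \<and> \<Inter>\<V> = D"

definition essential_domain :: "'k::field set \<Rightarrow> bool" where
  "essential_domain D \<longleftrightarrow> (\<exists>\<V>. essential_representation D \<V>)"

definition ess_spec :: "'k::field set \<Rightarrow> 'k set set" where
  "ess_spec D = {P \<in> Spec D. valuation_domain (localization D P)}"

definition basic_open :: "'k::field set \<Rightarrow> 'k \<Rightarrow> 'k set set" where
  "basic_open D f = {P \<in> Spec D. f \<notin> P}"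

definition constructible_topology :: "'k::field set \<Rightarrow> 'k set topology" where
  "constructible_topology D = topology_generated_by
     ({basic_open D f | f. f \<in> D} \<union> {Spec D - basic_open D f | f. f \<in> D})"

end

theory Submission
  imports Defs
begin

text \<open>
  (i) \<open>\<Longrightarrow>\<close> (ii): take \<open>Y = t-Spec(D)\<close>. In a PvMD every nonzero \<open>t\<close>-prime lies in a \<open>t\<close>-maximal
  ideal \<open>M\<close>, and \<open>D\<^sub>P \<supseteq> D\<^sub>M\<close> is a valuation domain. \<open>D\<close> is the intersection of its localizations at
  \<open>t\<close>-maximal ideals, because for \<open>x \<notin> D\<close> the conductor \<open>{d. d x \<in> D}\<close> is a proper \<open>t\<close>-ideal.
  Finally \<open>t-Spec(D)\<close> is constructibly closed: a prime \<open>P\<close> that is not a \<open>t\<close>-ideal contains a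
  finitely generated \<open>J\<close> with some \<open>x \<in> J\<^sup>v - P\<close>, and \<open>D(x) \<inter> V(J)\<close> is a constructible
  neighbourhood of \<open>P\<close> containing no \<open>t\<close>-prime.

  (ii) \<open>\<Longrightarrow>\<close> (i): let \<open>M\<close> be a nonzero \<open>t\<close>-maximal ideal. If a finite \<open>F \<subseteq> M\<close> lay in no
  \<open>Q \<in> Y\<close>, every \<open>y\<close> with \<open>y (F, m) \<subseteq> D\<close> would lie in all \<open>D\<^sub>Q\<close>, hence in \<open>D\<close>, so
  \<open>1 \<in> (F, m)\<^sup>v \<subseteq> M\<close>. Hence the sets \<open>{Q \<in> Y. F \<subseteq> Q}\<close> have the finite intersection property,
  and the limit \<open>Q\<^sub>0\<close> of an ultrafilter containing them is a prime of \<open>Cl\<^sup>c(Y) \<subseteq> \<E>(D)\<close> above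
  \<open>M\<close>; so \<open>D\<^sub>M \<supseteq> D\<^sub>Q\<^sub>0\<close> is a valuation domain.
\<close>

section \<open>Ultrafilters on a set\<close>

definition finite_intersection_property :: "'a set \<Rightarrow> 'a set set \<Rightarrow> bool" where
  "finite_intersection_property Y \<B> \<longleftrightarrow> (\<forall>\<G>. finite \<G> \<and> \<G> \<subseteq> \<B> \<longrightarrow> Y \<inter> \<Inter>\<G> \<noteq> {})"

definition ultrafilter_on :: "'a set \<Rightarrow> 'a set set \<Rightarrow> bool" where
  "ultrafilter_on Y \<U> \<longleftrightarrow> \<U> \<subseteq> Pow Y \<and> {} \<notin> \<U> \<and>
     (\<forall>A\<in>\<U>. \<forall>C\<in>\<U>. A \<inter> C \<in> \<U>) \<and>
     (\<forall>A\<in>\<U>. \<forall>C. A \<subseteq> C \<and> C \<subseteq> Y \<longrightarrow> C \<in> \<U>) \<and>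
     (\<forall>A. A \<subseteq> Y \<longrightarrow> A \<in> \<U> \<or> Y - A \<in> \<U>)"

lemma finite_intersection_property_insert:
  "finite_intersection_property Y (insert X \<U>) \<longleftrightarrow>
     (\<forall>\<G>. finite \<G> \<and> \<G> \<subseteq> \<U> \<longrightarrow> Y \<inter> X \<inter> \<Inter>\<G> \<noteq> {})"
  unfolding finite_intersection_property_def
proof safe
  fix \<G> assume "\<forall>\<G>. finite \<G> \<and> \<G> \<subseteq> insert X \<U> \<longrightarrow> Y \<inter> \<Inter>\<G> \<noteq> {}"
    and "finite \<G>" "\<G> \<subseteq> \<U>" "Y \<inter> X \<inter> \<Inter>\<G> = {}"
  then have "Y \<inter> \<Inter>(insert X \<G>) \<noteq> {}" by blast
  then show False using \<open>Y \<inter> X \<inter> \<Inter>\<G> = {}\<close> by (simp add: Int_assoc)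
next
  fix \<G> assume h: "\<forall>\<G>. finite \<G> \<and> \<G> \<subseteq> \<U> \<longrightarrow> Y \<inter> X \<inter> \<Inter>\<G> \<noteq> {}"
    and "finite \<G>" "\<G> \<subseteq> insert X \<U>" "Y \<inter> \<Inter>\<G> = {}"
  then have "Y \<inter> X \<inter> \<Inter>(\<G> - {X}) \<noteq> {}" by auto
  moreover have "Y \<inter> X \<inter> \<Inter>(\<G> - {X}) \<subseteq> Y \<inter> \<Inter>\<G>" by blast
  ultimately show False using \<open>Y \<inter> \<Inter>\<G> = {}\<close> by blast
qed

lemma maximal_finite_intersection_property_is_ultrafilter:
  assumes fip: "finite_intersection_property Y \<U>" and sub: "\<U> \<subseteq> Pow Y"
    and maximal: "\<And>X. X \<subseteq> Y \<Longrightarrow> finite_intersection_property Y (insert X \<U>) \<Longrightarrow> X \<in> \<U>"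
  shows "ultrafilter_on Y \<U>"
proof -
  have fipD: "Y \<inter> \<Inter>\<G> \<noteq> {}" if "finite \<G>" "\<G> \<subseteq> \<U>" for \<G>
    using fip that unfolding finite_intersection_property_def by blast
  have "{} \<notin> \<U>" using fipD[of "{{}}"] by auto
  moreover have "A \<inter> C \<in> \<U>" if "A \<in> \<U>" "C \<in> \<U>" for A C
  proof (rule maximal)
    show "A \<inter> C \<subseteq> Y" using that sub by blast
    show "finite_intersection_property Y (insert (A \<inter> C) \<U>)"
      unfolding finite_intersection_property_insert
    proof safe
      fix \<G> assume "finite \<G>" "\<G> \<subseteq> \<U>" "Y \<inter> (A \<inter> C) \<inter> \<Inter>\<G> = {}"
      moreover from this have "Y \<inter> \<Inter>(insert A (insert C \<G>)) \<noteq> {}" using that by (intro fipD) auto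
      ultimately show False by (simp add: Int_assoc)
    qed
  qed
  moreover have "C \<in> \<U>" if "A \<in> \<U>" "A \<subseteq> C" "C \<subseteq> Y" for A C
  proof (rule maximal[OF \<open>C \<subseteq> Y\<close>])
    show "finite_intersection_property Y (insert C \<U>)"
      unfolding finite_intersection_property_insert
    proof safe
      fix \<G> assume "finite \<G>" "\<G> \<subseteq> \<U>" "Y \<inter> C \<inter> \<Inter>\<G> = {}"
      moreover from this have "Y \<inter> \<Inter>(insert A \<G>) \<noteq> {}" using that by (intro fipD) auto
      ultimately show False using \<open>A \<subseteq> C\<close> by blast
    qed
  qed
  moreover have "A \<in> \<U> \<or> Y - A \<in> \<U>" if "A \<subseteq> Y" for A
  proof (rule ccontr)
    assume "\<not> (A \<in> \<U> \<or> Y - A \<in> \<U>)"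
    then obtain \<G>\<^sub>1 \<G>\<^sub>2 where "finite \<G>\<^sub>1" "\<G>\<^sub>1 \<subseteq> \<U>" "Y \<inter> A \<inter> \<Inter>\<G>\<^sub>1 = {}"
      and "finite \<G>\<^sub>2" "\<G>\<^sub>2 \<subseteq> \<U>" "Y \<inter> (Y - A) \<inter> \<Inter>\<G>\<^sub>2 = {}"
      using maximal[OF \<open>A \<subseteq> Y\<close>] maximal[of "Y - A"]
      unfolding finite_intersection_property_insert by blast
    moreover from this have "Y \<inter> \<Inter>(\<G>\<^sub>1 \<union> \<G>\<^sub>2) \<noteq> {}" by (intro fipD) auto
    ultimately show False by blast
  qed
  ultimately show ?thesis using sub unfolding ultrafilter_on_def by blast
qed

lemma ex_ultrafilter_on_extending:
  assumes "finite_intersection_property Y \<B>" and "\<B> \<subseteq> Pow Y"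
  shows "\<exists>\<U>. ultrafilter_on Y \<U> \<and> \<B> \<subseteq> \<U>"
proof -
  let ?A = "{\<U>. \<B> \<subseteq> \<U> \<and> \<U> \<subseteq> Pow Y \<and> finite_intersection_property Y \<U>}"
  have "\<exists>\<U>\<in>?A. \<forall>\<V>\<in>?A. \<U> \<subseteq> \<V> \<longrightarrow> \<V> = \<U>"
  proof (rule subset_Zorn_nonempty)
    show "?A \<noteq> {}" using assms by blast
    fix \<C> assume "\<C> \<noteq> {}" and chain: "subset.chain ?A \<C>"
    have "finite_intersection_property Y (\<Union>\<C>)"
      unfolding finite_intersection_property_def
    proof (intro allI impI)
      fix \<G> assume "finite \<G> \<and> \<G> \<subseteq> \<Union>\<C>"
      then obtain \<V> where "\<V> \<in> \<C>" "\<G> \<subseteq> \<V>"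
        using finite_subset_Union_chain[OF _ _ \<open>\<C> \<noteq> {}\<close> chain] by blast
      moreover have "finite_intersection_property Y \<V>"
        using chain \<open>\<V> \<in> \<C>\<close> unfolding subset_chain_def by blast
      ultimately show "Y \<inter> \<Inter>\<G> \<noteq> {}"
        using \<open>finite \<G> \<and> \<G> \<subseteq> \<Union>\<C>\<close> unfolding finite_intersection_property_def by blast
    qed
    then show "\<Union>\<C> \<in> ?A" using chain \<open>\<C> \<noteq> {}\<close> unfolding subset_chain_def by blast
  qed
  then obtain \<U> where "\<U> \<in> ?A" and maximal: "\<forall>\<V>\<in>?A. \<U> \<subseteq> \<V> \<longrightarrow> \<V> = \<U>" by blast
  moreover have "ultrafilter_on Y \<U>"
  proof (rule maximal_finite_intersection_property_is_ultrafilter)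
    fix X assume "X \<subseteq> Y" "finite_intersection_property Y (insert X \<U>)"
    then have "insert X \<U> \<in> ?A" using \<open>\<U> \<in> ?A\<close> by blast
    then have "insert X \<U> = \<U>" by (rule maximal[rule_format]) blast
    then show "X \<in> \<U>" by blast
  qed (use \<open>\<U> \<in> ?A\<close> in simp_all)
  ultimately show ?thesis by blast
qed

lemma ultrafilter_onD:
  assumes "ultrafilter_on Y \<U>"
  shows "\<U> \<subseteq> Pow Y" "{} \<notin> \<U>" "Y \<in> \<U>"
    and "A \<in> \<U> \<Longrightarrow> C \<in> \<U> \<Longrightarrow> A \<inter> C \<in> \<U>"
    and "A \<in> \<U> \<Longrightarrow> A \<subseteq> C \<Longrightarrow> C \<subseteq> Y \<Longrightarrow> C \<in> \<U>"
    and "A \<subseteq> Y \<Longrightarrow> A \<notin> \<U> \<Longrightarrow> Y - A \<in> \<U>"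
  using assms unfolding ultrafilter_on_def by blast+

section \<open>\<open>t\<close>-ideals of a domain inside its field of fractions\<close>

locale domain_in_field =
  fixes D :: "'k::field set"
  assumes subring: "subring D"
begin

lemma zero_mem: "0 \<in> D" and one_mem: "1 \<in> D"
  and add_mem: "a \<in> D \<Longrightarrow> b \<in> D \<Longrightarrow> a + b \<in> D"
  and diff_mem: "a \<in> D \<Longrightarrow> b \<in> D \<Longrightarrow> a - b \<in> D"
  and mult_mem: "a \<in> D \<Longrightarrow> b \<in> D \<Longrightarrow> a * b \<in> D"
  using subring unfolding subring_def by auto

lemma ideal_sum_mem:
  "finite A \<Longrightarrow> ideal_of D I \<Longrightarrow> (\<And>x. x \<in> A \<Longrightarrow> g x \<in> I) \<Longrightarrow> sum g A \<in> I"
  by (induction A rule: finite_induct) (auto simp: ideal_of_def)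

lemma ideal_eq_iff_one_mem: "ideal_of D I \<Longrightarrow> I = D \<longleftrightarrow> 1 \<in> I"
  using one_mem unfolding ideal_of_def by (metis mult.right_neutral subsetI subset_antisym)

lemma ideal_of_D: "ideal_of D D"
  unfolding ideal_of_def using zero_mem add_mem mult_mem by blast

lemma ideal_gen_subset: "finite F \<Longrightarrow> F \<subseteq> I \<Longrightarrow> ideal_of D I \<Longrightarrow> ideal_gen D F \<subseteq> I"
  unfolding ideal_gen_def
proof safe
  fix c assume "finite F" "F \<subseteq> I" "ideal_of D I" "\<forall>x\<in>F. c x \<in> D"
  then show "(\<Sum>x\<in>F. c x * x) \<in> I"
    by (intro ideal_sum_mem) (auto simp: ideal_of_def)
qed

lemma mem_ideal_gen: "f \<in> F \<Longrightarrow> finite F \<Longrightarrow> f \<in> ideal_gen D F"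
proof -
  assume "f \<in> F" "finite F"
  have "(\<Sum>x\<in>F. (if x = f then 1 else 0) * x) = (\<Sum>x\<in>F. if x = f then x else 0)"
    by (rule sum.cong) auto
  also have "\<dots> = f" using \<open>f \<in> F\<close> \<open>finite F\<close> by simp
  finally have "(\<Sum>x\<in>F. (if x = f then 1 else 0) * x) = f" .
  then show ?thesis unfolding ideal_gen_def using zero_mem one_mem
    by (intro CollectI exI[of _ "\<lambda>x. if x = f then 1 else 0"]) auto
qed

lemma ideal_of_ideal_gen: "finite F \<Longrightarrow> F \<subseteq> D \<Longrightarrow> ideal_of D (ideal_gen D F)"
  unfolding ideal_of_def
proof (intro conjI ballI)
  assume F: "finite F" "F \<subseteq> D"
  show "ideal_gen D F \<subseteq> D" using ideal_gen_subset[OF F ideal_of_D] .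
  show "0 \<in> ideal_gen D F" unfolding ideal_gen_def using zero_mem
    by (intro CollectI exI[of _ "\<lambda>x. 0"]) auto
  fix a b assume "a \<in> ideal_gen D F" "b \<in> ideal_gen D F"
  then obtain c e where "\<forall>x\<in>F. c x \<in> D" "a = (\<Sum>x\<in>F. c x * x)"
    and "\<forall>x\<in>F. e x \<in> D" "b = (\<Sum>x\<in>F. e x * x)" unfolding ideal_gen_def by blast
  then show "a + b \<in> ideal_gen D F" unfolding ideal_gen_def using add_mem
    by (intro CollectI exI[of _ "\<lambda>x. c x + e x"]) (auto simp: sum.distrib distrib_right)
next
  fix d a assume "d \<in> D" "a \<in> ideal_gen D F"
  then obtain c where "\<forall>x\<in>F. c x \<in> D" "a = (\<Sum>x\<in>F. c x * x)" unfolding ideal_gen_def by blast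
  with \<open>d \<in> D\<close> show "d * a \<in> ideal_gen D F" unfolding ideal_gen_def using mult_mem
    by (intro CollectI exI[of _ "\<lambda>x. d * c x"]) (auto simp: sum_distrib_left mult.assoc)
qed

lemma ideal_gen_eq_zero_iff: "finite F \<Longrightarrow> F \<subseteq> D \<Longrightarrow> ideal_gen D F = {0} \<longleftrightarrow> F \<subseteq> {0}"
proof
  assume "finite F" "F \<subseteq> D" "ideal_gen D F = {0}"
  then show "F \<subseteq> {0}" using mem_ideal_gen by blast
next
  assume "finite F" "F \<subseteq> D" "F \<subseteq> {0}"
  then have "ideal_gen D F \<subseteq> {0}" unfolding ideal_gen_def by (auto intro!: sum.neutral)
  moreover have "0 \<in> ideal_gen D F"
    using ideal_of_ideal_gen[OF \<open>finite F\<close> \<open>F \<subseteq> D\<close>] unfolding ideal_of_def by blast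
  ultimately show "ideal_gen D F = {0}" by blast
qed

lemma v_op_subset: "J \<subseteq> D \<Longrightarrow> v_op D J \<subseteq> D"
proof
  fix x assume "J \<subseteq> D" and x: "x \<in> v_op D J"
  from \<open>J \<subseteq> D\<close> have "1 \<in> colon D J" unfolding colon_def by auto
  then have "x * 1 \<in> D" using x unfolding v_op_def colon_def by blast
  then show "x \<in> D" by simp
qed

lemma subset_v_op: "J \<subseteq> v_op D J"
  unfolding v_op_def colon_def by (auto simp: mult.commute)

lemma subset_t_op: "ideal_of D I \<Longrightarrow> I \<noteq> {0} \<Longrightarrow> I \<subseteq> t_op D I"
proof
  fix a assume I: "ideal_of D I" "I \<noteq> {0}" and "a \<in> I"
  obtain a' where "a' \<in> I" "a' \<noteq> 0" using I unfolding ideal_of_def by blast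
  let ?J = "ideal_gen D {a, a'}"
  have "?J \<subseteq> I" using ideal_gen_subset I(1) \<open>a \<in> I\<close> \<open>a' \<in> I\<close> by simp
  moreover have "{a, a'} \<subseteq> D" using I(1) \<open>a \<in> I\<close> \<open>a' \<in> I\<close> unfolding ideal_of_def by auto
  then have "fin_gen_ideal D ?J" unfolding fin_gen_ideal_def by (intro exI[of _ "{a, a'}"]) simp
  moreover have "?J \<noteq> {0}" using mem_ideal_gen[of a' "{a, a'}"] \<open>a' \<noteq> 0\<close> by auto
  ultimately have "v_op D ?J \<in> {v_op D J | J. J \<subseteq> I \<and> fin_gen_ideal D J \<and> J \<noteq> {0}}"
    by (intro CollectI exI[of _ ?J]) simp
  moreover have "a \<in> v_op D ?J" using subset_v_op mem_ideal_gen[of a "{a, a'}"] by auto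
  ultimately show "a \<in> t_op D I" unfolding t_op_def by (rule UnionI)
qed

lemma t_idealI:
  assumes "ideal_of D I"
    and "\<And>J. J \<subseteq> I \<Longrightarrow> fin_gen_ideal D J \<Longrightarrow> J \<noteq> {0} \<Longrightarrow> v_op D J \<subseteq> I"
  shows "t_ideal D I"
proof (cases "I = {0}")
  case False
  then have "I \<subseteq> t_op D I" using subset_t_op assms(1) by blast
  moreover have "t_op D I \<subseteq> I" unfolding t_op_def using assms(2) by auto
  ultimately have "I = t_op D I" by (rule equalityI)
  then show ?thesis using assms(1) unfolding t_ideal_def by blast
qed (use assms(1) in \<open>simp add: t_ideal_def\<close>)

lemma t_idealD: "t_ideal D I \<Longrightarrow> I \<noteq> {0} \<Longrightarrow>
    J \<subseteq> I \<Longrightarrow> fin_gen_ideal D J \<Longrightarrow> J \<noteq> {0} \<Longrightarrow> v_op D J \<subseteq> I"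
  unfolding t_ideal_def t_op_def by auto

lemma t_ideal_Union_chain:
  assumes chain: "subset.chain {J. t_ideal D J} \<C>" and "\<C> \<noteq> {}" and "{0} \<notin> \<C>"
  shows "t_ideal D (\<Union>\<C>)"
proof -
  have ideal: "ideal_of D X" and t: "t_ideal D X" if "X \<in> \<C>" for X
    using chain that unfolding subset_chain_def t_ideal_def by auto
  have total: "X \<subseteq> Y \<or> Y \<subseteq> X" if "X \<in> \<C>" "Y \<in> \<C>" for X Y
    using chain that unfolding subset_chain_def by blast
  have "ideal_of D (\<Union>\<C>)" unfolding ideal_of_def
  proof (intro conjI ballI)
    show "\<Union>\<C> \<subseteq> D" "0 \<in> \<Union>\<C>" using ideal \<open>\<C> \<noteq> {}\<close> unfolding ideal_of_def by blast+
    fix a b assume "a \<in> \<Union>\<C>" "b \<in> \<Union>\<C>"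
    then obtain X Y where "X \<in> \<C>" "a \<in> X" "Y \<in> \<C>" "b \<in> Y" by blast
    then show "a + b \<in> \<Union>\<C>"
      using total[of X Y] ideal[of X] ideal[of Y] unfolding ideal_of_def by blast
  next
    fix d a assume "d \<in> D" "a \<in> \<Union>\<C>"
    then show "d * a \<in> \<Union>\<C>" using ideal unfolding ideal_of_def by blast
  qed
  then show ?thesis
  proof (rule t_idealI)
    fix J assume J: "J \<subseteq> \<Union>\<C>" "fin_gen_ideal D J" "J \<noteq> {0}"
    then obtain F where F: "finite F" "F \<subseteq> D" "J = ideal_gen D F"
      unfolding fin_gen_ideal_def by blast
    then have "F \<subseteq> \<Union>\<C>" using J(1) mem_ideal_gen by blast
    then obtain X where "X \<in> \<C>" "F \<subseteq> X"
      using finite_subset_Union_chain[OF F(1) _ \<open>\<C> \<noteq> {}\<close> chain] by blast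
    then have "J \<subseteq> X" using ideal_gen_subset[OF F(1)] ideal F(3) by blast
    then have "v_op D J \<subseteq> X" using t_idealD[OF t] J \<open>X \<in> \<C>\<close> \<open>{0} \<notin> \<C>\<close> by blast
    then show "v_op D J \<subseteq> \<Union>\<C>" using \<open>X \<in> \<C>\<close> by blast
  qed
qed

lemma t_maximal_exists:
  assumes "t_ideal D I" "I \<noteq> {0}" "I \<noteq> D"
  obtains M where "t_maximal D M" "I \<subseteq> M"
proof -
  let ?A = "{J. t_ideal D J \<and> 1 \<notin> J \<and> I \<subseteq> J}"
  have proper_iff: "J \<noteq> D \<longleftrightarrow> 1 \<notin> J" if "t_ideal D J" for J
    using ideal_eq_iff_one_mem that unfolding t_ideal_def by blast
  have "\<exists>M\<in>?A. \<forall>J\<in>?A. M \<subseteq> J \<longrightarrow> J = M"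
  proof (rule subset_Zorn_nonempty)
    show "?A \<noteq> {}" using assms proper_iff by blast
    fix \<C> assume "\<C> \<noteq> {}" and chain: "subset.chain ?A \<C>"
    then have "\<C> \<subseteq> ?A" unfolding subset_chain_def by blast
    have "subset.chain {J. t_ideal D J} \<C>"
      using chain unfolding subset_chain_def by (simp add: subset_iff)
    moreover have "{0} \<notin> \<C>"
    proof
      assume "{0} \<in> \<C>"
      then have "I \<subseteq> {0}" using \<open>\<C> \<subseteq> ?A\<close> by blast
      moreover have "0 \<in> I" using assms(1) unfolding t_ideal_def ideal_of_def by blast
      ultimately show False using assms(2) by auto
    qed
    ultimately have "t_ideal D (\<Union>\<C>)" using t_ideal_Union_chain \<open>\<C> \<noteq> {}\<close> by blast
    moreover have "1 \<notin> \<Union>\<C>" "I \<subseteq> \<Union>\<C>" using \<open>\<C> \<subseteq> ?A\<close> \<open>\<C> \<noteq> {}\<close> by blast+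
    ultimately show "\<Union>\<C> \<in> ?A" by blast
  qed
  then obtain M where "M \<in> ?A" and maximal: "\<forall>J\<in>?A. M \<subseteq> J \<longrightarrow> J = M" by blast
  have "t_maximal D M" unfolding t_maximal_def
  proof (intro conjI allI impI)
    show "t_ideal D M" "M \<noteq> D" using \<open>M \<in> ?A\<close> proper_iff by blast+
    fix J assume "t_ideal D J \<and> J \<noteq> D \<and> M \<subseteq> J"
    then have "J \<in> ?A" "M \<subseteq> J" using \<open>M \<in> ?A\<close> proper_iff by blast+
    then show "J = M" by (rule maximal[rule_format])
  qed
  then show thesis using that \<open>M \<in> ?A\<close> by blast
qed

lemma v_op_ideal_gen_scale:
  assumes F: "finite F" "F \<subseteq> D" and "b \<in> D" and x: "x \<in> v_op D (ideal_gen D F)"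
  shows "b * x \<in> v_op D (ideal_gen D ((*) b ` F))"
  unfolding v_op_def colon_def
proof safe
  fix y assume y: "\<forall>z\<in>ideal_gen D ((*) b ` F). y * z \<in> D"
  have ybf: "y * (b * f) \<in> D" if "f \<in> F" for f
    using y mem_ideal_gen[of "b * f" "(*) b ` F"] F that by auto
  have "y * b \<in> colon D (ideal_gen D F)" unfolding colon_def
  proof safe
    fix j assume "j \<in> ideal_gen D F"
    then obtain c where c: "\<forall>f\<in>F. c f \<in> D" "j = (\<Sum>f\<in>F. c f * f)" unfolding ideal_gen_def by blast
    have "y * b * j = (\<Sum>f\<in>F. c f * (y * (b * f)))" unfolding c(2)
      by (simp add: sum_distrib_left mult.assoc mult.left_commute)
    also have "\<dots> \<in> D"
      by (rule ideal_sum_mem[OF F(1) ideal_of_D]) (use c(1) ybf mult_mem in blast)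
    finally show "y * b * j \<in> D" .
  qed
  then have "x * (y * b) \<in> D" using x unfolding v_op_def colon_def by blast
  then show "b * x * y \<in> D" by (simp add: mult_ac)
qed

lemma ideal_of_colon_elem:
  assumes "ideal_of D M" "b \<in> D"
  shows "ideal_of D {x \<in> D. x * b \<in> M}"
proof -
  have M: "0 \<in> M" "\<And>x y. x \<in> M \<Longrightarrow> y \<in> M \<Longrightarrow> x + y \<in> M" "\<And>d x. d \<in> D \<Longrightarrow> x \<in> M \<Longrightarrow> d * x \<in> M"
    using assms(1) unfolding ideal_of_def by blast+
  show ?thesis unfolding ideal_of_def
    using zero_mem add_mem mult_mem M by (simp add: distrib_right mult.assoc)
qed

lemma t_ideal_colon_elem:
  assumes M: "t_ideal D M" "M \<noteq> {0}" and b: "b \<in> D" "b \<noteq> 0"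
  shows "t_ideal D {x \<in> D. x * b \<in> M}"
proof (rule t_idealI)
  have "ideal_of D M" using M(1) unfolding t_ideal_def by blast
  then show "ideal_of D {x \<in> D. x * b \<in> M}" using ideal_of_colon_elem b(1) by blast
  fix J assume J: "J \<subseteq> {x \<in> D. x * b \<in> M}" "fin_gen_ideal D J" "J \<noteq> {0}"
  then obtain F where F: "finite F" "F \<subseteq> D" "J = ideal_gen D F" unfolding fin_gen_ideal_def by blast
  let ?bJ = "ideal_gen D ((*) b ` F)"
  have bF: "(*) b ` F \<subseteq> D" using F(2) b(1) mult_mem by blast
  have "b * f \<in> M" if "f \<in> F" for f
  proof -
    have "f * b \<in> M" using J(1) F(3) mem_ideal_gen[OF that F(1)] by blast
    then show ?thesis by (simp add: mult.commute)
  qed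
  then have "?bJ \<subseteq> M" using ideal_gen_subset[OF _ _ \<open>ideal_of D M\<close>] F(1) by blast
  moreover have "fin_gen_ideal D ?bJ" unfolding fin_gen_ideal_def using F(1) bF by blast
  moreover have "?bJ \<noteq> {0}"
  proof
    assume "?bJ = {0}"
    then have "F \<subseteq> {0}" using ideal_gen_eq_zero_iff[of "(*) b ` F"] F(1) bF b(2) by auto
    then show False using J(3) F ideal_gen_eq_zero_iff by blast
  qed
  ultimately have bJM: "v_op D ?bJ \<subseteq> M" using t_idealD M by blast
  show "v_op D J \<subseteq> {x \<in> D. x * b \<in> M}"
  proof
    fix x assume x: "x \<in> v_op D J"
    have "J \<subseteq> D" using J(1) by blast
    then have "x \<in> D" using v_op_subset x by blast
    moreover have "b * x \<in> M" using v_op_ideal_gen_scale[OF F(1,2) b(1)] x F(3) bJM by blast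
    ultimately show "x \<in> {x \<in> D. x * b \<in> M}" by (simp add: mult.commute)
  qed
qed

lemma t_maximal_imp_prime:
  assumes "t_maximal D M"
  shows "prime_ideal_of D M"
proof (cases "M = {0}")
  case True
  then show ?thesis unfolding prime_ideal_of_def ideal_of_def using zero_mem one_mem by auto
next
  case False
  have M: "t_ideal D M" "M \<noteq> D"
    and maximal: "\<And>J. t_ideal D J \<Longrightarrow> J \<noteq> D \<Longrightarrow> M \<subseteq> J \<Longrightarrow> J = M"
    using assms unfolding t_maximal_def by auto
  have "ideal_of D M" using M(1) unfolding t_ideal_def by blast
  show ?thesis unfolding prime_ideal_of_def
  proof (intro conjI \<open>ideal_of D M\<close> M(2) ballI impI)
    fix a b assume "a \<in> D" "b \<in> D" "a * b \<in> M"
    show "a \<in> M \<or> b \<in> M"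
    proof (rule ccontr)
      assume "\<not> (a \<in> M \<or> b \<in> M)"
      then have "a \<notin> M" "b \<notin> M" by auto
      then have "b \<noteq> 0" using \<open>ideal_of D M\<close> unfolding ideal_of_def by auto
      let ?N = "{x \<in> D. x * b \<in> M}"
      \<comment> \<open>\<open>?N\<close> is a \<open>t\<close>-ideal strictly containing \<open>M\<close> (it contains \<open>a\<close>), so it is \<open>D\<close>; but \<open>1 \<notin> ?N\<close>.\<close>
      have "t_ideal D ?N" using t_ideal_colon_elem M(1) False \<open>b \<in> D\<close> \<open>b \<noteq> 0\<close> by blast
      moreover have "M \<subseteq> ?N"
        using \<open>ideal_of D M\<close> \<open>b \<in> D\<close> unfolding ideal_of_def by (auto simp: mult.commute)
      moreover have "?N \<noteq> M" using \<open>a \<in> D\<close> \<open>a * b \<in> M\<close> \<open>a \<notin> M\<close> by blast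
      ultimately have "?N = D" using maximal by blast
      then have "1 \<in> ?N" using one_mem by (simp only:)
      then show False using \<open>b \<notin> M\<close> by simp
    qed
  qed
qed

lemma subset_localization: "prime_ideal_of D P \<Longrightarrow> D \<subseteq> localization D P"
proof
  fix x assume "prime_ideal_of D P" "x \<in> D"
  moreover from this have "1 \<notin> P"
    using ideal_eq_iff_one_mem unfolding prime_ideal_of_def by blast
  ultimately show "x \<in> localization D P" unfolding localization_def using one_mem
    by (intro CollectI exI[of _ x] exI[of _ 1]) auto
qed

lemma localization_antimono: "P \<subseteq> Q \<Longrightarrow> localization D Q \<subseteq> localization D P"
  unfolding localization_def by blast

lemma subring_localization:
  assumes P: "prime_ideal_of D P"
  shows "subring (localization D P)"
proof -
  have "0 \<in> P" using P unfolding prime_ideal_of_def ideal_of_def by blast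
  have closed: "b * d \<notin> P" if "b \<in> D" "d \<in> D" "b \<notin> P" "d \<notin> P" for b d
    using P that unfolding prime_ideal_of_def by blast
  show ?thesis unfolding subring_def
  proof (intro conjI ballI)
    show "0 \<in> localization D P" "1 \<in> localization D P"
      using subset_localization[OF P] zero_mem one_mem by blast+
    fix x y assume "x \<in> localization D P" "y \<in> localization D P"
    then obtain a b c d where ab: "a \<in> D" "b \<in> D" "b \<notin> P" "x = a / b"
      and cd: "c \<in> D" "d \<in> D" "d \<notin> P" "y = c / d" unfolding localization_def by blast
    have "b \<noteq> 0" "d \<noteq> 0" using ab cd \<open>0 \<in> P\<close> by auto
    have bd: "b * d \<in> D" "b * d \<notin> P" using mult_mem closed ab cd by auto
    have "x + y = (a * d + c * b) / (b * d)" "x - y = (a * d - c * b) / (b * d)"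
      "x * y = (a * c) / (b * d)"
      using ab cd \<open>b \<noteq> 0\<close> \<open>d \<noteq> 0\<close> by (simp_all add: field_simps)
    moreover have "a * d + c * b \<in> D" "a * d - c * b \<in> D" "a * c \<in> D"
      using ab cd add_mem diff_mem mult_mem by simp_all
    ultimately show "x + y \<in> localization D P" "x - y \<in> localization D P" "x * y \<in> localization D P"
      using bd unfolding localization_def by blast+
  qed
qed

lemma t_ideal_conductor: "t_ideal D {d \<in> D. d * x \<in> D}"
proof (rule t_idealI)
  show "ideal_of D {d \<in> D. d * x \<in> D}"
    unfolding ideal_of_def using zero_mem add_mem mult_mem by (simp add: distrib_right mult.assoc)
  fix J assume J: "J \<subseteq> {d \<in> D. d * x \<in> D}"
  show "v_op D J \<subseteq> {d \<in> D. d * x \<in> D}"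
  proof
    fix z assume z: "z \<in> v_op D J"
    have "J \<subseteq> D" using J by blast
    then have "z \<in> D" using v_op_subset z by blast
    moreover have "x \<in> colon D J" using J unfolding colon_def by (auto simp: mult.commute)
    then have "z * x \<in> D" using z unfolding v_op_def colon_def by blast
    ultimately show "z \<in> {d \<in> D. d * x \<in> D}" by blast
  qed
qed

end

section \<open>The constructible topology\<close>

text \<open>The paper's \<open>t-Spec(D)\<close>; it contains \<open>(0)\<close>, which is a \<open>t\<close>-ideal by definition.\<close>

definition t_Spec :: "'k::field set \<Rightarrow> 'k set set" where
  "t_Spec D = {P \<in> Spec D. t_ideal D P}"

context domain_in_field
begin

lemma topspace_constructible_topology: "topspace (constructible_topology D) = Spec D"
proof -
  have "basic_open D 1 = Spec D"
    unfolding basic_open_def Spec_def prime_ideal_of_def using ideal_eq_iff_one_mem by blast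
  then show ?thesis
    unfolding constructible_topology_def topology_generated_by_topspace
    using one_mem unfolding basic_open_def by blast
qed

lemma openin_constructible_basic_open:
  "f \<in> D \<Longrightarrow> openin (constructible_topology D) (basic_open D f)"
  and openin_constructible_vanishing:
  "f \<in> D \<Longrightarrow> openin (constructible_topology D) (Spec D - basic_open D f)"
  unfolding constructible_topology_def openin_topology_generated_by_iff
  by (auto intro: generate_topology_on.Basis)

lemma closedin_constructible_t_Spec: "closedin (constructible_topology D) (t_Spec D)"
  unfolding closure_of_subset_eq[symmetric]
proof
  show "t_Spec D \<subseteq> topspace (constructible_topology D)"
    unfolding topspace_constructible_topology t_Spec_def by blast
  show "constructible_topology D closure_of t_Spec D \<subseteq> t_Spec D"
  proof
    fix P assume P: "P \<in> constructible_topology D closure_of t_Spec D"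
    then have "P \<in> Spec D"
      using closure_of_subset_topspace[of "constructible_topology D"]
      unfolding topspace_constructible_topology by blast
    then have "ideal_of D P" unfolding Spec_def prime_ideal_of_def by blast
    show "P \<in> t_Spec D"
    proof (rule ccontr)
      assume "P \<notin> t_Spec D"
      then have "\<not> t_ideal D P" using \<open>P \<in> Spec D\<close> unfolding t_Spec_def by blast
      then have "P \<noteq> {0}" "P \<noteq> t_op D P" using \<open>ideal_of D P\<close> unfolding t_ideal_def by simp_all
      then obtain x where "x \<in> t_op D P" "x \<notin> P"
        using subset_t_op[OF \<open>ideal_of D P\<close>] by blast
      then obtain F where F: "finite F" "F \<subseteq> D" "ideal_gen D F \<subseteq> P" "ideal_gen D F \<noteq> {0}"
        and x: "x \<in> v_op D (ideal_gen D F)"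
        unfolding t_op_def fin_gen_ideal_def by blast
      let ?J = "ideal_gen D F"
      have "?J \<subseteq> D" "0 \<in> ?J" using ideal_of_ideal_gen[OF F(1,2)] unfolding ideal_of_def by blast+
      then have "x \<in> D" using v_op_subset x by blast
      \<comment> \<open>The neighbourhood \<open>D(x) \<inter> V(F)\<close> of \<open>P\<close> misses every \<open>t\<close>-prime, since a \<open>t\<close>-prime
        containing \<open>F\<close> contains \<open>x \<in> (F)\<^sup>v\<close>.\<close>
      let ?U = "basic_open D x \<inter> ((\<Inter>f\<in>F. Spec D - basic_open D f) \<inter> Spec D)"
      have "openin (constructible_topology D)
          ((\<Inter>f\<in>F. Spec D - basic_open D f) \<inter> topspace (constructible_topology D))"
        by (rule openin_INT[OF F(1)]) (use F(2) openin_constructible_vanishing in blast)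
      then have U: "openin (constructible_topology D) ?U"
        using openin_Int[OF openin_constructible_basic_open[OF \<open>x \<in> D\<close>]]
        unfolding topspace_constructible_topology by blast
      have "F \<subseteq> P" using F(3) mem_ideal_gen[OF _ F(1)] by blast
      then have "P \<in> ?U" using \<open>P \<in> Spec D\<close> \<open>x \<notin> P\<close> unfolding basic_open_def by blast
      then obtain Q where Q: "Q \<in> t_Spec D" "Q \<in> ?U"
        using P U unfolding in_closure_of by (elim conjE allE[of _ ?U]) blast
      then have "ideal_of D Q" "t_ideal D Q" unfolding t_Spec_def Spec_def prime_ideal_of_def by blast+
      have "F \<subseteq> Q" using Q(2) unfolding basic_open_def by blast
      then have "?J \<subseteq> Q" using ideal_gen_subset[OF F(1) _ \<open>ideal_of D Q\<close>] by blast
      then have "Q \<noteq> {0}" using F(4) \<open>0 \<in> ?J\<close> by auto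
      moreover have "fin_gen_ideal D ?J" unfolding fin_gen_ideal_def using F(1,2) by blast
      ultimately have "v_op D ?J \<subseteq> Q" using t_idealD[OF \<open>t_ideal D Q\<close>] \<open>?J \<subseteq> Q\<close> F(4) by blast
      then show False using x Q(2) unfolding basic_open_def by blast
    qed
  qed
qed

end

definition ultrafilter_limit :: "'k::field set \<Rightarrow> 'k set set \<Rightarrow> 'k set set set \<Rightarrow> 'k set" where
  "ultrafilter_limit D Y \<U> = {f \<in> D. {Q \<in> Y. f \<in> Q} \<in> \<U>}"

context domain_in_field
begin

lemma prime_ideal_ultrafilter_limit:
  assumes U: "ultrafilter_on Y \<U>" and Y: "Y \<subseteq> Spec D"
  shows "prime_ideal_of D (ultrafilter_limit D Y \<U>)"
proof -
  have prime: "prime_ideal_of D Q" if "Q \<in> Y" for Q using Y that unfolding Spec_def by blast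
  have ideal: "ideal_of D Q" if "Q \<in> Y" for Q using prime[OF that] unfolding prime_ideal_of_def by blast
  note U = ultrafilter_onD[OF U]
  let ?L = "ultrafilter_limit D Y \<U>"
  have L: "f \<in> ?L \<longleftrightarrow> f \<in> D \<and> {Q \<in> Y. f \<in> Q} \<in> \<U>" for f
    unfolding ultrafilter_limit_def by simp
  show ?thesis unfolding prime_ideal_of_def ideal_of_def
  proof (intro conjI ballI impI)
    show "?L \<subseteq> D" using L by blast
    have "{Q \<in> Y. 0 \<in> Q} = Y" using ideal unfolding ideal_of_def by auto
    then show "0 \<in> ?L" using L zero_mem U(3) by simp
    have "{Q \<in> Y. 1 \<in> Q} = {}" using prime ideal_eq_iff_one_mem unfolding prime_ideal_of_def by auto
    then have "1 \<notin> ?L" using L U(2) by metis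
    then show "?L \<noteq> D" using one_mem by metis
  next
    fix a b assume "a \<in> ?L" "b \<in> ?L"
    then have "{Q \<in> Y. a \<in> Q} \<inter> {Q \<in> Y. b \<in> Q} \<in> \<U>" using L by (intro U(4)) simp_all
    moreover have "{Q \<in> Y. a \<in> Q} \<inter> {Q \<in> Y. b \<in> Q} \<subseteq> {Q \<in> Y. a + b \<in> Q}"
      using ideal unfolding ideal_of_def by blast
    ultimately have "{Q \<in> Y. a + b \<in> Q} \<in> \<U>" by (rule U(5)) blast
    then show "a + b \<in> ?L" using \<open>a \<in> ?L\<close> \<open>b \<in> ?L\<close> L add_mem by simp
  next
    fix d a assume "d \<in> D" "a \<in> ?L"
    then have "{Q \<in> Y. a \<in> Q} \<in> \<U>" using L by simp
    moreover have "{Q \<in> Y. a \<in> Q} \<subseteq> {Q \<in> Y. d * a \<in> Q}"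
      using ideal \<open>d \<in> D\<close> unfolding ideal_of_def by blast
    ultimately have "{Q \<in> Y. d * a \<in> Q} \<in> \<U>" by (rule U(5)) blast
    then show "d * a \<in> ?L" using \<open>d \<in> D\<close> \<open>a \<in> ?L\<close> L mult_mem by simp
  next
    fix a b assume "a \<in> D" "b \<in> D" "a * b \<in> ?L"
    show "a \<in> ?L \<or> b \<in> ?L"
    proof (cases "a \<in> ?L")
      case False
      then have "Y - {Q \<in> Y. a \<in> Q} \<in> \<U>" using \<open>a \<in> D\<close> L by (intro U(6)) auto
      moreover have "{Q \<in> Y. a * b \<in> Q} \<in> \<U>" using \<open>a * b \<in> ?L\<close> L by simp
      ultimately have "(Y - {Q \<in> Y. a \<in> Q}) \<inter> {Q \<in> Y. a * b \<in> Q} \<in> \<U>" by (rule U(4))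
      moreover have "(Y - {Q \<in> Y. a \<in> Q}) \<inter> {Q \<in> Y. a * b \<in> Q} \<subseteq> {Q \<in> Y. b \<in> Q}"
        using prime \<open>a \<in> D\<close> \<open>b \<in> D\<close> unfolding prime_ideal_of_def by blast
      ultimately have "{Q \<in> Y. b \<in> Q} \<in> \<U>" by (rule U(5)) blast
      then show ?thesis using \<open>b \<in> D\<close> L by simp
    qed simp
  qed
qed

lemma ultrafilter_limit_in_constructible_closure:
  assumes U: "ultrafilter_on Y \<U>" and Y: "Y \<subseteq> Spec D"
  shows "ultrafilter_limit D Y \<U> \<in> constructible_topology D closure_of Y"
proof -
  let ?L = "ultrafilter_limit D Y \<U>"
  let ?S = "{basic_open D f | f. f \<in> D} \<union> {Spec D - basic_open D f | f. f \<in> D}"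
  have "?L \<in> Spec D" using prime_ideal_ultrafilter_limit[OF U Y] unfolding Spec_def by simp
  note U = ultrafilter_onD[OF U]
  have nbhd: "{Q \<in> Y. Q \<in> T} \<in> \<U>" if "generate_topology_on ?S T" "?L \<in> T" for T
    using that
  proof (induction rule: generate_topology_on.induct)
    case (Int a b)
    then have "{Q \<in> Y. Q \<in> a} \<inter> {Q \<in> Y. Q \<in> b} \<in> \<U>" by (intro U(4)) simp_all
    moreover have "{Q \<in> Y. Q \<in> a} \<inter> {Q \<in> Y. Q \<in> b} = {Q \<in> Y. Q \<in> a \<inter> b}" by auto
    ultimately show ?case by simp
  next
    case (UN K)
    then obtain k where "k \<in> K" "?L \<in> k" by blast
    then have "{Q \<in> Y. Q \<in> k} \<in> \<U>" using UN.IH by blast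
    moreover have "{Q \<in> Y. Q \<in> k} \<subseteq> {Q \<in> Y. Q \<in> \<Union>K}" using \<open>k \<in> K\<close> by blast
    ultimately show ?case by (rule U(5)) blast
  next
    case (Basis s)
    then obtain f where "f \<in> D" and s: "s = basic_open D f \<or> s = Spec D - basic_open D f" by blast
    then show ?case
    proof (elim disjE)
      assume 1: "s = basic_open D f"
      then have "f \<notin> ?L" using Basis.prems unfolding basic_open_def by blast
      then have "Y - {Q \<in> Y. f \<in> Q} \<in> \<U>"
        using \<open>f \<in> D\<close> unfolding ultrafilter_limit_def by (intro U(6)) auto
      moreover have "Y - {Q \<in> Y. f \<in> Q} = {Q \<in> Y. Q \<in> s}"
        using 1 Y unfolding basic_open_def by auto
      ultimately show ?thesis by simp
    next
      assume 2: "s = Spec D - basic_open D f"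
      then have "f \<in> ?L" using Basis.prems unfolding basic_open_def by blast
      then have "{Q \<in> Y. f \<in> Q} \<in> \<U>" unfolding ultrafilter_limit_def by simp
      moreover have "{Q \<in> Y. f \<in> Q} = {Q \<in> Y. Q \<in> s}"
        using 2 Y unfolding basic_open_def by auto
      ultimately show ?thesis by simp
    qed
  qed simp
  show ?thesis unfolding in_closure_of topspace_constructible_topology
  proof (intro conjI allI impI)
    fix T assume T: "?L \<in> T \<and> openin (constructible_topology D) T"
    then have "generate_topology_on ?S T"
      unfolding constructible_topology_def openin_topology_generated_by_iff by blast
    then have "{Q \<in> Y. Q \<in> T} \<in> \<U>" using nbhd T by blast
    then have "{Q \<in> Y. Q \<in> T} \<noteq> {}" using U(2) by metis
    then show "\<exists>Q. Q \<in> Y \<and> Q \<in> T" by blast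
  qed fact
qed

lemma finite_subset_in_representation:
  assumes Y: "Y \<subseteq> Spec D" "\<Inter>(localization D ` Y) = D"
    and M: "t_ideal D M" "M \<noteq> D" "M \<noteq> {0}" and F: "finite F" "F \<subseteq> M"
  shows "\<exists>Q\<in>Y. F \<subseteq> Q"
proof (rule ccontr)
  assume none: "\<not> (\<exists>Q\<in>Y. F \<subseteq> Q)"
  have "ideal_of D M" using M(1) unfolding t_ideal_def by blast
  then obtain m where "m \<in> M" "m \<noteq> 0" using M(3) unfolding ideal_of_def by blast
  let ?F = "insert m F"
  let ?J = "ideal_gen D ?F"
  have "finite ?F" "?F \<subseteq> M" using F \<open>m \<in> M\<close> by auto
  then have "?F \<subseteq> D" using \<open>ideal_of D M\<close> unfolding ideal_of_def by blast
  have "?J \<subseteq> M" using ideal_gen_subset[OF \<open>finite ?F\<close> \<open>?F \<subseteq> M\<close> \<open>ideal_of D M\<close>] .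
  moreover have "fin_gen_ideal D ?J" unfolding fin_gen_ideal_def using \<open>finite ?F\<close> \<open>?F \<subseteq> D\<close> by blast
  moreover have "m \<in> ?J" using mem_ideal_gen \<open>finite ?F\<close> by simp
  then have "?J \<noteq> {0}" using \<open>m \<noteq> 0\<close> by auto
  ultimately have "v_op D ?J \<subseteq> M" using t_idealD[OF M(1,3)] by blast
  \<comment> \<open>Each \<open>Q \<in> Y\<close> misses some \<open>f \<in> ?F\<close>, so anything multiplying \<open>?J\<close> into \<open>D\<close> lies in
    every \<open>D\<^sub>Q\<close>, hence in \<open>D\<close>: that is, \<open>1 \<in> ?J\<^sup>v\<close>.\<close>
  moreover have "1 \<in> v_op D ?J" unfolding v_op_def colon_def
  proof safe
    fix y assume y: "\<forall>z\<in>?J. y * z \<in> D"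
    have "y \<in> localization D Q" if "Q \<in> Y" for Q
    proof -
      obtain f where "f \<in> ?F" "f \<notin> Q" using none \<open>Q \<in> Y\<close> \<open>m \<in> M\<close> by blast
      moreover have "0 \<in> Q" using Y(1) \<open>Q \<in> Y\<close> unfolding Spec_def prime_ideal_of_def ideal_of_def by blast
      ultimately have "f \<noteq> 0" by blast
      then have "y = (y * f) / f" by simp
      moreover have "y * f \<in> D" using y mem_ideal_gen[OF \<open>f \<in> ?F\<close> \<open>finite ?F\<close>] by blast
      ultimately show ?thesis
        using \<open>f \<in> ?F\<close> \<open>f \<notin> Q\<close> \<open>?F \<subseteq> D\<close> unfolding localization_def by blast
    qed
    then show "1 * y \<in> D" using Y(2) by auto
  qed
  ultimately have "1 \<in> M" by blast
  then show False using ideal_eq_iff_one_mem \<open>ideal_of D M\<close> M(2) by blast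
qed

lemma prime_in_constructible_closure_above:
  assumes Y: "Y \<subseteq> Spec D" "\<Inter>(localization D ` Y) = D"
    and M: "t_ideal D M" "M \<noteq> D" "M \<noteq> {0}"
  obtains Q where "prime_ideal_of D Q" "Q \<in> constructible_topology D closure_of Y" "M \<subseteq> Q"
proof -
  define \<B> where "\<B> = (\<lambda>F. {Q \<in> Y. F \<subseteq> Q}) ` {F. finite F \<and> F \<subseteq> M}"
  have "finite_intersection_property Y \<B>"
    unfolding finite_intersection_property_def
  proof (intro allI impI)
    fix \<G> assume "finite \<G> \<and> \<G> \<subseteq> \<B>"
    then obtain \<F> where \<F>: "\<F> \<subseteq> {F. finite F \<and> F \<subseteq> M}" "finite \<F>" "\<G> = (\<lambda>F. {Q \<in> Y. F \<subseteq> Q}) ` \<F>"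
      using finite_subset_image[of \<G> "\<lambda>F. {Q \<in> Y. F \<subseteq> Q}" "{F. finite F \<and> F \<subseteq> M}"]
      unfolding \<B>_def by blast
    then have "finite (\<Union>\<F>)" "\<Union>\<F> \<subseteq> M" by auto
    then obtain Q where "Q \<in> Y" "\<Union>\<F> \<subseteq> Q" using finite_subset_in_representation[OF Y M] by meson
    then have "Q \<in> Y \<inter> \<Inter>\<G>" unfolding \<F>(3) by blast
    then show "Y \<inter> \<Inter>\<G> \<noteq> {}" by blast
  qed
  moreover have "\<B> \<subseteq> Pow Y" unfolding \<B>_def by blast
  ultimately obtain \<U> where \<U>: "ultrafilter_on Y \<U>" "\<B> \<subseteq> \<U>"
    using ex_ultrafilter_on_extending by meson
  have "M \<subseteq> ultrafilter_limit D Y \<U>"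
  proof
    fix x assume "x \<in> M"
    then have "{Q \<in> Y. {x} \<subseteq> Q} \<in> \<B>" unfolding \<B>_def by (intro imageI) simp
    then have "{Q \<in> Y. {x} \<subseteq> Q} \<in> \<U>" using \<U>(2) by blast
    moreover have "x \<in> D" using \<open>x \<in> M\<close> M(1) unfolding t_ideal_def ideal_of_def by blast
    ultimately show "x \<in> ultrafilter_limit D Y \<U>" unfolding ultrafilter_limit_def by simp
  qed
  then show thesis
    by (rule that[OF prime_ideal_ultrafilter_limit[OF \<U>(1) Y(1)]
          ultrafilter_limit_in_constructible_closure[OF \<U>(1) Y(1)]])
qed

end

section \<open>Essential representations and PvMDs\<close>

locale domain_with_quotient_field = domain_in_field +
  assumes frac_set_eq_UNIV: "frac_set D = UNIV"
begin

lemma valuation_domain_overring: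
  assumes "D \<subseteq> V" "V \<subseteq> W" "subring W" "valuation_domain V"
  shows "valuation_domain W"
proof -
  have "frac_set V = UNIV" using frac_set_eq_UNIV \<open>D \<subseteq> V\<close> unfolding frac_set_def by blast
  then show ?thesis using assms(2-4) unfolding valuation_domain_def by blast
qed

lemma valuation_domain_localization_antimono:
  assumes "prime_ideal_of D P" "prime_ideal_of D Q" "P \<subseteq> Q"
    and "valuation_domain (localization D Q)"
  shows "valuation_domain (localization D P)"
  by (rule valuation_domain_overring[OF subset_localization[OF assms(2)]
        localization_antimono[OF assms(3)] subring_localization[OF assms(1)] assms(4)])

lemma valuation_domain_localization_zero: "valuation_domain (localization D {0})"
proof -
  have "localization D {0} = UNIV" using frac_set_eq_UNIV unfolding localization_def frac_set_def by simp
  then show ?thesis unfolding valuation_domain_def subring_def by simp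
qed

lemma valuation_domain_localization_t_Spec:
  assumes "PvMD D" "P \<in> t_Spec D"
  shows "valuation_domain (localization D P)"
proof (cases "P = {0}")
  case True
  then show ?thesis using valuation_domain_localization_zero by simp
next
  case False
  have P: "prime_ideal_of D P" "t_ideal D P" using assms(2) unfolding t_Spec_def Spec_def by auto
  then have "P \<noteq> D" unfolding prime_ideal_of_def by blast
  then obtain M where "t_maximal D M" "P \<subseteq> M" using t_maximal_exists P(2) False by blast
  then show ?thesis
    using valuation_domain_localization_antimono[OF P(1) t_maximal_imp_prime] assms(1)
    unfolding PvMD_def by blast
qed

lemma Inter_localization_t_maximal:
  assumes "Y \<subseteq> Spec D" "{M. t_maximal D M} \<subseteq> Y"
  shows "\<Inter>(localization D ` Y) = D"
proof
  show "D \<subseteq> \<Inter>(localization D ` Y)"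
    using subset_localization assms(1) unfolding Spec_def by (simp add: INT_greatest subset_iff)
  show "\<Inter>(localization D ` Y) \<subseteq> D"
  proof
    fix x assume x: "x \<in> \<Inter>(localization D ` Y)"
    have "x \<in> frac_set D" using frac_set_eq_UNIV by simp
    then obtain a b where "a \<in> D" "b \<in> D" "b \<noteq> 0" "x = a / b"
      unfolding frac_set_def by blast
    let ?I = "{d \<in> D. d * x \<in> D}"
    \<comment> \<open>If \<open>x \<notin> D\<close>, the conductor \<open>?I\<close> is a proper \<open>t\<close>-ideal, hence inside a \<open>t\<close>-maximal \<open>M\<close>,
      and writing \<open>x\<close> as a fraction in \<open>D\<^sub>M\<close> produces a denominator in \<open>?I - M\<close>.\<close>
    have "b \<in> ?I" using \<open>a \<in> D\<close> \<open>b \<in> D\<close> \<open>b \<noteq> 0\<close> \<open>x = a / b\<close> by simp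
    then have "?I \<noteq> {0}" using \<open>b \<noteq> 0\<close> by auto
    show "x \<in> D"
    proof (rule ccontr)
      assume "x \<notin> D"
      then have "1 \<notin> ?I" by simp
      then have "?I \<noteq> D" using one_mem by metis
      then obtain M where M: "t_maximal D M" "?I \<subseteq> M"
        using t_maximal_exists[OF t_ideal_conductor \<open>?I \<noteq> {0}\<close> \<open>?I \<noteq> D\<close>] by blast
      then have "x \<in> localization D M" using x assms(2) by blast
      then obtain c e where "c \<in> D" "e \<in> D" "e \<notin> M" "x = c / e" unfolding localization_def by blast
      have "0 \<in> M" using M(1) unfolding t_maximal_def t_ideal_def ideal_of_def by blast
      then have "e \<noteq> 0" using \<open>e \<notin> M\<close> by blast
      then have "e * x = c" using \<open>x = c / e\<close> by simp
      then have "e \<in> ?I" using \<open>e \<in> D\<close> \<open>c \<in> D\<close> by simp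
      then show False using M(2) \<open>e \<notin> M\<close> by blast
    qed
  qed
qed

lemma PvMD_imp_t_Spec_representation:
  assumes "PvMD D"
  shows "essential_representation D (localization D ` t_Spec D)"
    and "constructible_topology D closure_of t_Spec D \<subseteq> ess_spec D"
proof -
  have "t_Spec D \<subseteq> ess_spec D"
    using valuation_domain_localization_t_Spec[OF assms] unfolding t_Spec_def ess_spec_def by blast
  then show "constructible_topology D closure_of t_Spec D \<subseteq> ess_spec D"
    using closure_of_closedin[OF closedin_constructible_t_Spec] by simp
  have "{M. t_maximal D M} \<subseteq> t_Spec D"
    using t_maximal_imp_prime unfolding t_Spec_def Spec_def t_maximal_def by blast
  then have "\<Inter>(localization D ` t_Spec D) = D"
    by (rule Inter_localization_t_maximal[rotated]) (auto simp: t_Spec_def)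
  moreover have "essential_valuation_overring D (localization D P)" if "P \<in> t_Spec D" for P
    using that \<open>t_Spec D \<subseteq> ess_spec D\<close> subset_localization
    unfolding essential_valuation_overring_def ess_spec_def Spec_def by blast
  ultimately show "essential_representation D (localization D ` t_Spec D)"
    unfolding essential_representation_def by blast
qed

lemma representation_imp_PvMD:
  assumes Y: "Y \<subseteq> Spec D" "essential_representation D (localization D ` Y)"
    and closure: "constructible_topology D closure_of Y \<subseteq> ess_spec D"
  shows "PvMD D"
  unfolding PvMD_def
proof (intro allI impI)
  fix M assume "t_maximal D M"
  then have M: "t_ideal D M" "M \<noteq> D" "prime_ideal_of D M"
    using t_maximal_imp_prime unfolding t_maximal_def by blast+
  show "valuation_domain (localization D M)"
  proof (cases "M = {0}")
    case True
    then show ?thesis using valuation_domain_localization_zero by simp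
  next
    case False
    have "\<Inter>(localization D ` Y) = D" using Y(2) unfolding essential_representation_def by blast
    then obtain Q where "prime_ideal_of D Q" "Q \<in> constructible_topology D closure_of Y" "M \<subseteq> Q"
      using prime_in_constructible_closure_above[OF Y(1) _ M(1,2) False] by blast
    then show ?thesis
      using valuation_domain_localization_antimono[OF M(3)] closure unfolding ess_spec_def by blast
  qed
qed

end

theorem theorem2p4:
  fixes D :: "'k::field set"
  assumes "quotient_field_of D"
  shows "PvMD D \<longleftrightarrow>
    (essential_domain D \<and>
     (\<exists>Y. Y \<subseteq> Spec D \<and> essential_representation D (localization D ` Y) \<and>
          constructible_topology D closure_of Y \<subseteq> ess_spec D))"
proof -
  interpret domain_with_quotient_field D
    using assms unfolding quotient_field_of_def by unfold_locales auto
  show ?thesis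
  proof
    assume "PvMD D"
    moreover have "t_Spec D \<subseteq> Spec D" unfolding t_Spec_def by blast
    ultimately show "essential_domain D \<and>
     (\<exists>Y. Y \<subseteq> Spec D \<and> essential_representation D (localization D ` Y) \<and>
          constructible_topology D closure_of Y \<subseteq> ess_spec D)"
      using PvMD_imp_t_Spec_representation unfolding essential_domain_def by blast
  qed (use representation_imp_PvMD in blast)
qed

end
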